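(* Let $\mathbf{k}$ be an algebraically closed field with $\mathrm{char}(\mathbf{k})\neq 2$, let $S=\mathbf{k}[x,y,z,w]$, and let $\mathcal{H}$ be the standard graded Hilbert scheme parametrizing homogeneous ideals $I\subseteq S$ such that $S/I$ has Hilbert function $(1,4,4,4,\ldots)$. Let $\mathcal{X}$ be the closure in $\mathcal{H}$ of the (open) locus of ideals $I\in\mathcal{H}$ that are saturated. Then the lexicographic ideal $L=(x^2,xy,xz,xw,y^2,yz,yw^2,z^4)$ of $\mathcal{H}$ belongs to $\mathcal{X}$.
   Context: The lexicographic order is taken with $x>y>z>w$; the lexicographic ideal is the unique monomial ideal in $\mathcal{H}$ each of whose graded components is spanned by the lexicographically largest monomials of that degree. *)

theory Defs
  imports "HOL-Computational_Algebra.Polynomial" "HOL-Library.Poly_Mapping"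
begin

datatype var = X | Y | Z | W

type_synonym mon = "var \<Rightarrow>\<^sub>0 nat"
type_synonym 'k pol = "mon \<Rightarrow>\<^sub>0 'k"

definition mdeg :: "mon \<Rightarrow> nat" where
  "mdeg m = (\<Sum>v\<in>Poly_Mapping.keys m. Poly_Mapping.lookup m v)"

definition xmon :: "nat \<Rightarrow> nat \<Rightarrow> nat \<Rightarrow> nat \<Rightarrow> 'k::comm_ring_1 pol" where
  "xmon a b c d = Poly_Mapping.single
     (Poly_Mapping.single X a + Poly_Mapping.single Y b + Poly_Mapping.single Z c + Poly_Mapping.single W d) 1"

definition csmult :: "'k::comm_ring_1 \<Rightarrow> 'k pol \<Rightarrow> 'k pol" where
  "csmult c f = Poly_Mapping.single 0 c * f"

definition Sdeg :: "nat \<Rightarrow> 'k::comm_ring_1 pol set" where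
  "Sdeg d = {f. \<forall>m\<in>Poly_Mapping.keys f. mdeg m = d}"

definition hcomp :: "nat \<Rightarrow> 'k::comm_ring_1 pol \<Rightarrow> 'k pol" where
  "hcomp d f = (\<Sum>m\<in>{m\<in>Poly_Mapping.keys f. mdeg m = d}. Poly_Mapping.single m (Poly_Mapping.lookup f m))"

definition is_ideal :: "'k::comm_ring_1 pol set \<Rightarrow> bool" where
  "is_ideal I \<longleftrightarrow> 0 \<in> I \<and> (\<forall>f\<in>I. \<forall>g\<in>I. f + g \<in> I) \<and> (\<forall>f\<in>I. \<forall>g. g * f \<in> I)"

definition homogeneous_ideal :: "'k::comm_ring_1 pol set \<Rightarrow> bool" where
  "homogeneous_ideal I \<longleftrightarrow> is_ideal I \<and> (\<forall>f\<in>I. \<forall>d. hcomp d f \<in> I)"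

definition gen_ideal :: "'k::comm_ring_1 pol set \<Rightarrow> 'k pol set" where
  "gen_ideal G = \<Inter>{J. is_ideal J \<and> G \<subseteq> J}"

definition kdim :: "'k::field pol set \<Rightarrow> nat" where
  "kdim V = vector_space.dim csmult V"

(* Hilbert function of S/I:  dim_k (S/I)_d = dim S_d - dim I_d *)
definition hilb :: "'k::field pol set \<Rightarrow> nat \<Rightarrow> nat" where
  "hilb I d = kdim (Sdeg d :: 'k pol set) - kdim (I \<inter> Sdeg d)"

section \<open>k-points of the standard graded Hilbert scheme H with Hilbert function (1,4,4,...)\<close>

definition Hpts :: "'k::field pol set set" where
  "Hpts = {I. homogeneous_ideal I \<and> hilb I 0 = 1 \<and> (\<forall>d\<ge>1. hilb I d = 4)}"

(* m^N = polynomials all of whose terms have degree >= N *)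
definition mpow :: "nat \<Rightarrow> 'k::comm_ring_1 pol set" where
  "mpow N = {g. \<forall>m\<in>Poly_Mapping.keys g. N \<le> mdeg m}"

definition saturation :: "'k::comm_ring_1 pol set \<Rightarrow> 'k pol set" where
  "saturation I = {f. \<exists>N. \<forall>g\<in>mpow N. g * f \<in> I}"

definition saturated :: "'k::comm_ring_1 pol set \<Rightarrow> bool" where
  "saturated I \<longleftrightarrow> saturation I = I"

section \<open>Zariski topology on H (via the product of Grassmannians of the I_d)\<close>

definition is_frame :: "'k::field pol set \<Rightarrow> (nat \<Rightarrow> nat \<Rightarrow> 'k pol) \<Rightarrow> bool" where
  "is_frame I b \<longleftrightarrow> (\<forall>d. let r = kdim (I \<inter> Sdeg d) in
      (\<forall>i<r. b d i \<in> I \<inter> Sdeg d) \<and> inj_on (b d) {..<r}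
      \<and> module.independent csmult (b d ` {..<r})
      \<and> module.span csmult (b d ` {..<r}) = I \<inter> Sdeg d
      \<and> (\<forall>i\<ge>r. b d i = 0))"

(* affine coordinates of a frame: coefficient of monomial m in b d i *)
definition frame_coord :: "(nat \<Rightarrow> nat \<Rightarrow> 'k::zero pol) \<Rightarrow> nat \<times> nat \<times> mon \<Rightarrow> 'k" where
  "frame_coord b = (\<lambda>(d, i, m). Poly_Mapping.lookup (b d i) m)"

definition peval :: "(('v \<Rightarrow>\<^sub>0 nat) \<Rightarrow>\<^sub>0 'k::comm_ring_1) \<Rightarrow> ('v \<Rightarrow> 'k) \<Rightarrow> 'k" where
  "peval P a = (\<Sum>e\<in>Poly_Mapping.keys P. Poly_Mapping.lookup P e * (\<Prod>v\<in>Poly_Mapping.keys e. a v ^ Poly_Mapping.lookup e v))"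

(* Zariski closure in H of a set A of k-points: the closed subsets of H are exactly
   the sets {I \<in> H. every frame of I is a common zero of a family of polynomials} *)
definition zclosure :: "'k::field pol set set \<Rightarrow> 'k pol set set" where
  "zclosure A = {J \<in> Hpts. \<forall>P :: ((nat \<times> nat \<times> mon) \<Rightarrow>\<^sub>0 nat) \<Rightarrow>\<^sub>0 'k.
      (\<forall>I\<in>A. \<forall>b. is_frame I b \<longrightarrow> peval P (frame_coord b) = 0)
      \<longrightarrow> (\<forall>b. is_frame J b \<longrightarrow> peval P (frame_coord b) = 0)}"

definition Xcomp :: "'k::field pol set set" where
  "Xcomp = zclosure {I \<in> Hpts. saturated I}"

definition lexL :: "'k::comm_ring_1 pol set" where
  "lexL = gen_ideal {xmon 2 0 0 0, xmon 1 1 0 0, xmon 1 0 1 0, xmon 1 0 0 1,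
                     xmon 0 2 0 0, xmon 0 1 1 0, xmon 0 1 0 2, xmon 0 0 4 0}"

end

theory Submission
  imports Defs
begin

(*
  Fix four points p0 = (1:0:0:1), p1 = (0:0:1:1), p2 = (0:0:-1:1), p3 = (0:1:c:1) with c not in
  {0, 1, -1}, and move them by the one-parameter torus action with weights (5, 4, 1, 0) on
  (x, y, z, w).  For t \<noteq> 0 the ideal I_t of the moved points is saturated and has Hilbert function
  (1, 4, 4, ...).  In each degree d the standard monomials of L (those not in L) are unisolvent on
  the four points, so every f in L_d can be corrected by standard monomials to a form in I_t.  The
  weights make every monomial of L_d heavier than every standard monomial of degree d, hence the
  corrections are polynomials in t vanishing at t = 0.  Any basis of L_d is thus the value at t = 0
  of a polynomial family of bases of (I_t)_d, and a polynomial in the Grassmannian coordinates that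
  vanishes on the saturated locus vanishes at L as well.
*)

lemma poly_mapping_sum_single:
  assumes "finite A" "Poly_Mapping.keys f \<subseteq> A"
  shows "f = (\<Sum>m\<in>A. Poly_Mapping.single m (Poly_Mapping.lookup f m))"
proof (rule poly_mapping_eqI)
  fix k
  show "Poly_Mapping.lookup f k = Poly_Mapping.lookup (\<Sum>m\<in>A. Poly_Mapping.single m (Poly_Mapping.lookup f m)) k"
    using assms by (auto simp: lookup_sum lookup_single when_def in_keys_iff)
qed

definition restrict_keys :: "'a set \<Rightarrow> ('a \<Rightarrow>\<^sub>0 'b::comm_monoid_add) \<Rightarrow> 'a \<Rightarrow>\<^sub>0 'b" where
  "restrict_keys A f = (\<Sum>m\<in>A. Poly_Mapping.single m (Poly_Mapping.lookup f m))"

lemma lookup_restrict_keys: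
  "finite A \<Longrightarrow> Poly_Mapping.lookup (restrict_keys A f) m = (if m \<in> A then Poly_Mapping.lookup f m else 0)"
  by (simp add: restrict_keys_def lookup_sum lookup_single when_def)

lemma keys_restrict_keys: "finite A \<Longrightarrow> Poly_Mapping.keys (restrict_keys A f) \<subseteq> A"
  by (auto simp: in_keys_iff lookup_restrict_keys split: if_splits)

definition mon_eval :: "('v \<Rightarrow>\<^sub>0 nat) \<Rightarrow> ('v \<Rightarrow> 'k::comm_ring_1) \<Rightarrow> 'k" where
  "mon_eval m a = (\<Prod>v\<in>Poly_Mapping.keys m. a v ^ Poly_Mapping.lookup m v)"

definition wdeg :: "('v \<Rightarrow> nat) \<Rightarrow> ('v \<Rightarrow>\<^sub>0 nat) \<Rightarrow> nat" where
  "wdeg w m = (\<Sum>v\<in>Poly_Mapping.keys m. w v * Poly_Mapping.lookup m v)"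

lemma mon_eval_superset:
  assumes "finite A" "Poly_Mapping.keys m \<subseteq> A"
  shows "mon_eval m a = (\<Prod>v\<in>A. a v ^ Poly_Mapping.lookup m v)"
  unfolding mon_eval_def using assms
  by (intro prod.mono_neutral_left) (auto simp: in_keys_iff)

lemma mon_eval_add: "mon_eval (m + n) a = mon_eval m a * mon_eval n a"
proof -
  let ?A = "Poly_Mapping.keys m \<union> Poly_Mapping.keys n"
  have "Poly_Mapping.keys (m + n) \<subseteq> ?A" by (rule keys_add)
  then show ?thesis
    by (simp add: mon_eval_superset[of ?A] lookup_add power_add prod.distrib)
qed

lemma wdeg_superset:
  assumes "finite A" "Poly_Mapping.keys m \<subseteq> A"
  shows "wdeg w m = (\<Sum>v\<in>A. w v * Poly_Mapping.lookup m v)"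
  unfolding wdeg_def using assms
  by (intro sum.mono_neutral_left) (auto simp: in_keys_iff)

lemma mon_eval_weighted:
  "mon_eval m (\<lambda>v. t ^ w v * a v) = t ^ wdeg w m * mon_eval m a"
  by (simp add: mon_eval_def wdeg_def power_mult_distrib prod.distrib power_sum power_mult)

lemma peval_eq_sum_mon_eval: "peval f a = (\<Sum>m\<in>Poly_Mapping.keys f. Poly_Mapping.lookup f m * mon_eval m a)"
  by (simp add: peval_def mon_eval_def)

lemma peval_superset:
  assumes "finite A" "Poly_Mapping.keys f \<subseteq> A"
  shows "peval f a = (\<Sum>m\<in>A. Poly_Mapping.lookup f m * mon_eval m a)"
  unfolding peval_eq_sum_mon_eval using assms
  by (intro sum.mono_neutral_left) (auto simp: in_keys_iff)

lemma peval_0 [simp]: "peval 0 a = 0"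
  by (simp add: peval_def)

lemma peval_single [simp]: "peval (Poly_Mapping.single m c) a = c * mon_eval m a"
  by (simp add: peval_eq_sum_mon_eval)

lemma peval_add: "peval (f + g) a = peval f a + peval g a"
proof -
  let ?A = "Poly_Mapping.keys f \<union> Poly_Mapping.keys g"
  have "Poly_Mapping.keys (f + g) \<subseteq> ?A" by (rule keys_add)
  then show ?thesis
    by (simp add: peval_superset[of ?A] lookup_add distrib_right sum.distrib)
qed

lemma peval_sum: "peval (sum F A) a = (\<Sum>i\<in>A. peval (F i) a)"
  by (induction A rule: infinite_finite_induct) (simp_all add: peval_add)

lemma peval_diff: "peval (f - g) a = peval f a - peval g a"
  using peval_add[of "f - g" g a] by simp

lemma peval_mult: "peval (f * g) a = peval f a * peval g a"
proof -
  let ?F = "Poly_Mapping.keys f" and ?G = "Poly_Mapping.keys g"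
  have "f * g = (\<Sum>m\<in>?F. \<Sum>n\<in>?G. Poly_Mapping.single (m + n) (Poly_Mapping.lookup f m * Poly_Mapping.lookup g n))"
    by (subst poly_mapping_sum_single[OF finite_keys order_refl, of f], subst poly_mapping_sum_single[OF finite_keys order_refl, of g])
       (simp add: sum_distrib_left sum_distrib_right mult_single sum.swap[of _ ?G])
  then have "peval (f * g) a = (\<Sum>m\<in>?F. \<Sum>n\<in>?G. Poly_Mapping.lookup f m * Poly_Mapping.lookup g n * (mon_eval m a * mon_eval n a))"
    by (simp add: peval_sum mon_eval_add)
  also have "\<dots> = peval f a * peval g a"
    by (simp add: peval_eq_sum_mon_eval sum_distrib_left sum_distrib_right mult_ac sum.swap[of _ ?G])
  finally show ?thesis .
qed

lemma poly_eq_0_if_punctured_roots: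
  fixes p :: "'k::field poly"
  assumes "infinite (UNIV :: 'k set)" and "\<And>x. x \<noteq> 0 \<Longrightarrow> poly p x = 0"
  shows "p = 0"
proof (rule ccontr)
  assume "p \<noteq> 0"
  then have "finite (insert 0 {x. poly p x = 0})" by (simp add: poly_roots_finite)
  moreover have "insert 0 {x. poly p x = 0} = UNIV" using assms(2) by auto
  ultimately show False using assms(1) by simp
qed

lemma infinite_UNIV_alg_closed: "infinite (UNIV :: 'k::alg_closed_field set)"
proof
  assume fin: "finite (UNIV :: 'k set)"
  define p :: "'k poly" where "p = (\<Prod>a\<in>UNIV. [:-a, 1:])"
  have "degree p = card (UNIV :: 'k set)"
    unfolding p_def
    by (subst degree_prod_sum_eq) auto
  moreover have "card (UNIV :: 'k set) > 0" using fin by (simp add: card_gt_0_iff)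
  ultimately have "degree (p + 1) > 0" by (subst degree_add_eq_left) auto
  then obtain x where "poly (p + 1) x = 0" using alg_closed_imp_poly_has_root by blast
  moreover have "poly p x = 0"
    unfolding p_def poly_prod using fin by (intro prod_zero) auto
  ultimately show False by simp
qed

lemma peval_polynomial_curve_at_0:
  fixes F :: "'v \<Rightarrow> 'k::field poly"
  assumes "infinite (UNIV :: 'k set)" and "\<And>t. t \<noteq> 0 \<Longrightarrow> peval P (\<lambda>v. poly (F v) t) = 0"
  shows "peval P (\<lambda>v. poly (F v) 0) = 0"
proof -
  define Q where "Q = (\<Sum>e\<in>Poly_Mapping.keys P. [:Poly_Mapping.lookup P e:] * (\<Prod>v\<in>Poly_Mapping.keys e. F v ^ Poly_Mapping.lookup e v))"
  have Q: "poly Q t = peval P (\<lambda>v. poly (F v) t)" for t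
    by (simp add: Q_def peval_def poly_sum poly_prod)
  have "Q = 0"
    using assms by (intro poly_eq_0_if_punctured_roots) (simp_all add: Q)
  then show ?thesis using Q[of 0] by simp
qed

lemma mdeg_eq_wdeg: "mdeg m = wdeg (\<lambda>_. 1) m"
  by (simp add: mdeg_def wdeg_def)

lemma mon_eval_scale: "mon_eval m (\<lambda>v. l * a v) = l ^ mdeg m * mon_eval m a"
  using mon_eval_weighted[of m l "\<lambda>_. 1" a] by (simp add: mdeg_eq_wdeg)

definition mon4 :: "nat \<Rightarrow> nat \<Rightarrow> nat \<Rightarrow> nat \<Rightarrow> mon" where
  "mon4 a b c e = Poly_Mapping.single X a + Poly_Mapping.single Y b + Poly_Mapping.single Z c + Poly_Mapping.single W e"

lemma lookup_mon4 [simp]: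
  "Poly_Mapping.lookup (mon4 a b c e) X = a" "Poly_Mapping.lookup (mon4 a b c e) Y = b"
  "Poly_Mapping.lookup (mon4 a b c e) Z = c" "Poly_Mapping.lookup (mon4 a b c e) W = e"
  by (simp_all add: mon4_def lookup_add lookup_single)

lemma mon4_lookup:
  "m = mon4 (Poly_Mapping.lookup m X) (Poly_Mapping.lookup m Y) (Poly_Mapping.lookup m Z) (Poly_Mapping.lookup m W)"
  by (rule poly_mapping_eqI, case_tac k) simp_all

lemma mon4_inject [simp]: "mon4 a b c e = mon4 a' b' c' e' \<longleftrightarrow> a = a' \<and> b = b' \<and> c = c' \<and> e = e'"
  by (metis lookup_mon4)

lemma mon4_cases: obtains a b c e where "m = mon4 a b c e"
  using mon4_lookup by blast

lemma mon4_add: "mon4 a b c e + mon4 a' b' c' e' = mon4 (a + a') (b + b') (c + c') (e + e')"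
  by (rule poly_mapping_eqI, case_tac k) (simp_all add: lookup_add)

lemma xmon_eq: "xmon a b c e = Poly_Mapping.single (mon4 a b c e) 1"
  by (simp add: xmon_def mon4_def)

lemma keys_mon: "Poly_Mapping.keys (m :: mon) \<subseteq> {X, Y, Z, W}"
  using var.exhaust by blast

lemma wdeg_mon4: "wdeg w (mon4 a b c e) = w X * a + w Y * b + w Z * c + w W * e"
  by (simp add: wdeg_superset[OF _ keys_mon])

lemma mdeg_mon4 [simp]: "mdeg (mon4 a b c e) = a + b + c + e"
  by (simp add: mdeg_eq_wdeg wdeg_mon4)

lemma mon_eval_mon4: "mon_eval (mon4 a b c e) p = p X ^ a * p Y ^ b * p Z ^ c * p W ^ e"
  by (simp add: mon_eval_superset[OF _ keys_mon] mult_ac)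

lemma finite_mdeg_eq: "finite {m :: mon. mdeg m = d}"
proof (rule finite_subset)
  show "{m :: mon. mdeg m = d} \<subseteq> (\<lambda>(a, b, c, e). mon4 a b c e) ` ({..d} \<times> {..d} \<times> {..d} \<times> {..d})"
  proof
    fix m :: mon assume "m \<in> {m. mdeg m = d}"
    moreover obtain a b c e where "m = mon4 a b c e" by (rule mon4_cases)
    ultimately show "m \<in> (\<lambda>(a, b, c, e). mon4 a b c e) ` ({..d} \<times> {..d} \<times> {..d} \<times> {..d})"
      by (auto intro!: image_eqI[where x = "(a, b, c, e)"])
  qed
qed simp

lemma lookup_hcomp: "Poly_Mapping.lookup (hcomp d f) m = (if mdeg m = d then Poly_Mapping.lookup f m else 0)"
  by (auto simp: hcomp_def lookup_sum lookup_single when_def in_keys_iff)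

lemma keys_hcomp: "Poly_Mapping.keys (hcomp d f) \<subseteq> Poly_Mapping.keys f"
  by (auto simp: in_keys_iff lookup_hcomp split: if_splits)

lemma hcomp_hcomp: "hcomp n (hcomp d f) = (if n = d then hcomp d f else 0)"
  by (rule poly_mapping_eqI) (auto simp: lookup_hcomp)

lemma peval_homogeneous_scale:
  assumes "f \<in> Sdeg d"
  shows "peval f (\<lambda>v. l * a v) = l ^ d * peval f a"
  using assms by (simp add: peval_eq_sum_mon_eval Sdeg_def mon_eval_scale sum_distrib_left mult_ac)

definition radial_poly :: "'k::comm_ring_1 pol \<Rightarrow> (var \<Rightarrow> 'k) \<Rightarrow> 'k poly" where
  "radial_poly f a = (\<Sum>m\<in>Poly_Mapping.keys f. monom (Poly_Mapping.lookup f m * mon_eval m a) (mdeg m))"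

lemma poly_radial_poly: "poly (radial_poly f a) l = peval f (\<lambda>v. l * a v)"
  by (simp add: radial_poly_def peval_eq_sum_mon_eval poly_sum poly_monom mon_eval_scale mult_ac)

lemma coeff_radial_poly: "coeff (radial_poly f a) n = peval (hcomp n f) a"
proof -
  have "coeff (radial_poly f a) n = (\<Sum>m\<in>Poly_Mapping.keys f. if mdeg m = n then Poly_Mapping.lookup f m * mon_eval m a else 0)"
    by (simp add: radial_poly_def coeff_sum)
  also have "\<dots> = (\<Sum>m\<in>{m \<in> Poly_Mapping.keys f. mdeg m = n}. Poly_Mapping.lookup f m * mon_eval m a)"
    by (simp add: sum.inter_filter)
  also have "\<dots> = peval (hcomp n f) a"
    by (simp add: hcomp_def peval_sum)
  finally show ?thesis .
qed

section \<open>Ideals of finite sets of points\<close>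

definition vanishing_ideal :: "(var \<Rightarrow> 'k::comm_ring_1) set \<Rightarrow> 'k pol set" where
  "vanishing_ideal P = {f. \<forall>p\<in>P. \<forall>l. peval f (\<lambda>v. l * p v) = 0}"

lemma is_ideal_vanishing_ideal: "is_ideal (vanishing_ideal P)"
  by (simp add: is_ideal_def vanishing_ideal_def peval_add peval_mult)

lemma vanishing_ideal_iff_radial_poly:
  fixes P :: "(var \<Rightarrow> 'k::field) set"
  assumes "infinite (UNIV :: 'k set)"
  shows "f \<in> vanishing_ideal P \<longleftrightarrow> (\<forall>p\<in>P. radial_poly f p = 0)"
  using poly_eq_0_if_punctured_roots[OF assms]
  by (auto simp: vanishing_ideal_def poly_radial_poly[symmetric])

lemma homogeneous_vanishing_ideal:
  fixes P :: "(var \<Rightarrow> 'k::field) set"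
  assumes "infinite (UNIV :: 'k set)"
  shows "homogeneous_ideal (vanishing_ideal P)"
  unfolding homogeneous_ideal_def
proof (intro conjI is_ideal_vanishing_ideal ballI allI)
  fix f d assume "f \<in> vanishing_ideal P"
  then have "peval (hcomp d f) p = 0" if "p \<in> P" for p
    using that by (auto simp: vanishing_ideal_iff_radial_poly[OF assms] coeff_radial_poly[symmetric])
  then have "radial_poly (hcomp d f) p = 0" if "p \<in> P" for p
    using that by (intro poly_eqI) (simp add: coeff_radial_poly hcomp_hcomp)
  then show "hcomp d f \<in> vanishing_ideal P"
    by (simp add: vanishing_ideal_iff_radial_poly[OF assms])
qed

lemma homogeneous_in_vanishing_ideal_iff:
  assumes "f \<in> Sdeg d"
  shows "f \<in> vanishing_ideal P \<longleftrightarrow> (\<forall>p\<in>P. peval f p = 0)"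
proof
  assume "f \<in> vanishing_ideal P"
  then have "peval f (\<lambda>v. 1 * p v) = 0" if "p \<in> P" for p
    using that unfolding vanishing_ideal_def by blast
  then show "\<forall>p\<in>P. peval f p = 0" by simp
qed (simp add: vanishing_ideal_def peval_homogeneous_scale[OF assms])

text \<open>Points off the hyperplane \<open>w = 0\<close>: multiplying by \<open>w\<^sup>N\<close> detects membership.\<close>

lemma saturated_vanishing_ideal:
  fixes P :: "(var \<Rightarrow> 'k::field) set"
  assumes "infinite (UNIV :: 'k set)" and "\<And>p. p \<in> P \<Longrightarrow> p W \<noteq> 0"
  shows "saturated (vanishing_ideal P)"
  unfolding saturated_def
proof
  show "saturation (vanishing_ideal P) \<subseteq> vanishing_ideal P"
  proof
    fix f assume "f \<in> saturation (vanishing_ideal P)"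
    then obtain N where "\<forall>g\<in>mpow N. g * f \<in> vanishing_ideal P" by (auto simp: saturation_def)
    moreover have "xmon 0 0 0 N \<in> mpow N" by (simp add: mpow_def xmon_eq)
    ultimately have "xmon 0 0 0 N * f \<in> vanishing_ideal P" by blast
    then have wf: "l ^ N * p W ^ N * peval f (\<lambda>v. l * p v) = 0" if "p \<in> P" for p l
      using that unfolding vanishing_ideal_def by (simp add: peval_mult xmon_eq mon_eval_mon4 power_mult_distrib)
    have "peval f (\<lambda>v. l * p v) = 0" if "p \<in> P" "l \<noteq> 0" for p l
      using wf[OF that(1), of l] that(2) assms(2)[OF that(1)] by simp
    then show "f \<in> vanishing_ideal P"
      using poly_eq_0_if_punctured_roots[OF assms(1)]
      by (auto simp: vanishing_ideal_iff_radial_poly[OF assms(1)] poly_radial_poly)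
  qed
next
  show "vanishing_ideal P \<subseteq> saturation (vanishing_ideal P)"
    using is_ideal_vanishing_ideal[of P] by (auto simp: saturation_def is_ideal_def)
qed

lemma lookup_csmult [simp]: "Poly_Mapping.lookup (csmult c f) m = c * Poly_Mapping.lookup f m"
  by (simp add: csmult_def mult_map_scale_conv_mult[symmetric] map.rep_eq when_def)

interpretation vs: vector_space "csmult :: 'k::field \<Rightarrow> 'k pol \<Rightarrow> 'k pol"
  by unfold_locales (auto intro: poly_mapping_eqI simp: lookup_add algebra_simps)

lemma single_one_eq_iff [simp]:
  "Poly_Mapping.single m (1::'b::zero_neq_one) = Poly_Mapping.single m' 1 \<longleftrightarrow> m = m'"
  by (metis lookup_single_eq lookup_single_not_eq zero_neq_one)

lemma subspace_keys_subset: "vs.subspace {f :: 'k::field pol. Poly_Mapping.keys f \<subseteq> M}"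
  unfolding vs.subspace_def
  by (auto dest: subsetD[OF keys_add] simp: in_keys_iff)

lemma span_monomials:
  assumes "finite M"
  shows "vs.span ((\<lambda>m. Poly_Mapping.single m (1::'k::field)) ` M) = {f. Poly_Mapping.keys f \<subseteq> M}"
proof (rule vs.span_subspace)
  show "{f. Poly_Mapping.keys f \<subseteq> M} \<subseteq> vs.span ((\<lambda>m. Poly_Mapping.single m (1::'k)) ` M)"
  proof
    fix f :: "'k pol" assume "f \<in> {f. Poly_Mapping.keys f \<subseteq> M}"
    then have "f = (\<Sum>m\<in>M. csmult (Poly_Mapping.lookup f m) (Poly_Mapping.single m 1))"
      using poly_mapping_sum_single[OF assms] by (simp add: csmult_def mult_single)
    also have "\<dots> \<in> vs.span ((\<lambda>m. Poly_Mapping.single m (1::'k)) ` M)"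
      by (intro vs.span_sum vs.span_scale vs.span_base) auto
    finally show "f \<in> vs.span ((\<lambda>m. Poly_Mapping.single m (1::'k)) ` M)" .
  qed
qed (auto simp: subspace_keys_subset)

lemma independent_monomials: "vs.independent ((\<lambda>m. Poly_Mapping.single m (1::'k::field)) ` M)"
  unfolding vs.independent_explicit_module
proof (intro allI impI)
  fix T u v
  assume T: "finite T" "T \<subseteq> (\<lambda>m. Poly_Mapping.single m (1::'k)) ` M"
    and sum: "(\<Sum>v\<in>T. csmult (u v) v) = 0" and v: "v \<in> T"
  from v T obtain m where m: "v = Poly_Mapping.single m 1" by auto
  have "Poly_Mapping.lookup v' m = (if v' = v then 1 else 0)" if "v' \<in> T" for v'
  proof -
    from that T obtain m' where "v' = Poly_Mapping.single m' 1" by auto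
    then show ?thesis using m by (auto simp: lookup_single)
  qed
  then have "Poly_Mapping.lookup (\<Sum>v\<in>T. csmult (u v) v) m = (\<Sum>v'\<in>T. if v' = v then u v' else 0)"
    by (auto simp: lookup_sum intro!: sum.cong)
  then show "u v = 0" using sum T(1) v by simp
qed

lemma kdim_keys_subset:
  assumes "finite M"
  shows "kdim {f :: 'k::field pol. Poly_Mapping.keys f \<subseteq> M} = card M"
proof -
  have "inj_on (\<lambda>m. Poly_Mapping.single m (1::'k)) M"
    by (rule inj_onI) simp
  then show ?thesis
    unfolding kdim_def span_monomials[OF assms, symmetric]
    by (simp add: vs.dim_eq_card_independent independent_monomials card_image)
qed

lemma kdim_linear_image:
  assumes "module_hom csmult csmult f" "vs.subspace V" "inj_on f (V :: 'k::field pol set)"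
  shows "kdim (f ` V) = kdim V"
proof -
  obtain B where B: "B \<subseteq> V" "vs.independent B" "V \<subseteq> vs.span B" "card B = vs.dim V"
    using vs.basis_exists by blast
  have V: "vs.span B = V"
    using B(1,3) assms(2) vs.span_minimal by blast
  have "f ` V = vs.span (f ` B)"
    using module_hom.span_image[OF assms(1)] V by simp
  moreover have "vs.independent (f ` B)"
    using module_hom.independent_injective_image[OF assms(1) B(2)] assms(3) V by simp
  moreover have "card (f ` B) = card B"
    using card_image inj_on_subset[OF assms(3) B(1)] by blast
  ultimately show ?thesis
    using B(4) by (simp add: kdim_def vs.dim_eq_card_independent)
qed

lemma subspace_ideal_Sdeg:
  assumes "is_ideal (I :: 'k::field pol set)"
  shows "vs.subspace (I \<inter> Sdeg d)"
  unfolding vs.subspace_def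
proof (intro conjI ballI allI)
  show "0 \<in> I \<inter> Sdeg d" using assms by (simp add: is_ideal_def Sdeg_def)
  fix f g assume "f \<in> I \<inter> Sdeg d" "g \<in> I \<inter> Sdeg d"
  then show "f + g \<in> I \<inter> Sdeg d"
    using assms keys_add[of f g] by (auto simp: is_ideal_def Sdeg_def)
next
  fix c f assume "f \<in> I \<inter> Sdeg d"
  moreover have "Poly_Mapping.keys (csmult c f) \<subseteq> Poly_Mapping.keys f"
    by (auto simp: in_keys_iff)
  ultimately show "csmult c f \<in> I \<inter> Sdeg d"
    using assms unfolding is_ideal_def Sdeg_def csmult_def by auto
qed

lemma is_frame_in_graded_piece:
  assumes "is_ideal I" "is_frame I b"
  shows "b d i \<in> I \<inter> Sdeg d"
proof (cases "i < kdim (I \<inter> Sdeg d)")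
  case False
  then have "b d i = 0" using assms(2) by (simp add: is_frame_def Let_def)
  then show ?thesis using assms(1) by (simp add: is_ideal_def Sdeg_def)
qed (use assms(2) in \<open>simp add: is_frame_def Let_def\<close>)

lemma Hpts_if_kdim_eq:
  fixes I J :: "'k::field pol set"
  assumes "I \<in> Hpts" "homogeneous_ideal J" "\<And>d. kdim (J \<inter> Sdeg d) = kdim (I \<inter> Sdeg d)"
  shows "J \<in> Hpts"
  using assms unfolding Hpts_def hilb_def by auto

lemma is_frame_linear_image:
  assumes frame: "is_frame I b" and I: "is_ideal I"
    and hom: "\<And>d. module_hom csmult csmult (\<Phi> d)"
    and inj: "\<And>d. inj_on (\<Phi> d) (I \<inter> Sdeg d)"
    and img: "\<And>d. \<Phi> d ` (I \<inter> Sdeg d) = J \<inter> Sdeg d"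
  shows "is_frame J (\<lambda>d i. \<Phi> d (b d i))"
  unfolding is_frame_def Let_def
proof (rule allI, intro conjI)
  fix d
  define r where "r = kdim (I \<inter> Sdeg d)"
  let ?B = "b d ` {..<r}"
  from frame have b: "\<forall>i<r. b d i \<in> I \<inter> Sdeg d" "inj_on (b d) {..<r}" "vs.independent ?B"
      "vs.span ?B = I \<inter> Sdeg d" "\<forall>i\<ge>r. b d i = 0"
    unfolding is_frame_def Let_def r_def kdim_def by blast+
  have r: "kdim (J \<inter> Sdeg d) = r"
    using kdim_linear_image[OF hom subspace_ideal_Sdeg[OF I] inj] by (simp add: img r_def)
  have image: "(\<lambda>i. \<Phi> d (b d i)) ` {..<r} = \<Phi> d ` ?B" by auto
  show "\<forall>i<kdim (J \<inter> Sdeg d). \<Phi> d (b d i) \<in> J \<inter> Sdeg d"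
    using b(1) img[of d] r by blast
  show "inj_on (\<lambda>i. \<Phi> d (b d i)) {..<kdim (J \<inter> Sdeg d)}"
    using comp_inj_on[OF b(2) inj_on_subset[OF inj]] b(1) r by (auto simp: o_def)
  show "vs.independent ((\<lambda>i. \<Phi> d (b d i)) ` {..<kdim (J \<inter> Sdeg d)})"
    unfolding r image using module_hom.independent_injective_image[OF hom b(3)] inj b(4) by simp
  show "vs.span ((\<lambda>i. \<Phi> d (b d i)) ` {..<kdim (J \<inter> Sdeg d)}) = J \<inter> Sdeg d"
    unfolding r image module_hom.span_image[OF hom] b(4) img ..
  show "\<forall>i\<ge>kdim (J \<inter> Sdeg d). \<Phi> d (b d i) = 0"
    using b(5) module_hom.zero[OF hom] r by simp
qed

section \<open>The lexicographic ideal\<close>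

lemma is_ideal_sum: "is_ideal J \<Longrightarrow> (\<And>i. i \<in> A \<Longrightarrow> F i \<in> J) \<Longrightarrow> sum F A \<in> J"
  by (induction A rule: infinite_finite_induct) (auto simp: is_ideal_def)

lemma is_ideal_gen_ideal: "is_ideal (gen_ideal G)"
  unfolding gen_ideal_def is_ideal_def by blast

lemma is_ideal_keys_multiples:
  "is_ideal {f :: 'k::comm_ring_1 pol. Poly_Mapping.keys f \<subseteq> {g + r |g r. g \<in> G}}" (is "is_ideal ?M")
  unfolding is_ideal_def
proof (intro conjI ballI allI)
  fix f h assume "f \<in> ?M" "h \<in> ?M"
  then show "f + h \<in> ?M" using keys_add[of f h] by auto
next
  fix f h assume f: "f \<in> ?M"
  have "m \<in> {g + r |g r. g \<in> G}" if "m \<in> Poly_Mapping.keys (h * f)" for m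
  proof -
    obtain a b where "m = a + b" "b \<in> Poly_Mapping.keys f"
      using \<open>m \<in> Poly_Mapping.keys (h * f)\<close> keys_mult[of h f] by auto
    moreover from this f obtain g r where "g \<in> G" "b = g + r" by auto
    ultimately have "g \<in> G" "m = g + (r + a)" by (simp_all add: add_ac)
    then show ?thesis by blast
  qed
  then show "h * f \<in> ?M" by auto
qed simp

lemma gen_ideal_monomials:
  "gen_ideal ((\<lambda>g. Poly_Mapping.single g (1::'k::comm_ring_1)) ` G) = {f. Poly_Mapping.keys f \<subseteq> {g + r |g r. g \<in> G}}"
  (is "gen_ideal ?gens = ?M")
proof
  have "?gens \<subseteq> ?M" by auto (metis add.right_neutral)
  then show "gen_ideal ?gens \<subseteq> ?M" using is_ideal_keys_multiples unfolding gen_ideal_def by blast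
next
  show "?M \<subseteq> gen_ideal ?gens"
    unfolding gen_ideal_def
  proof (intro subsetI InterI)
    fix f J assume f: "f \<in> ?M" and "J \<in> {J. is_ideal J \<and> ?gens \<subseteq> J}"
    then have J: "is_ideal J" and gens: "\<And>g. g \<in> G \<Longrightarrow> Poly_Mapping.single g 1 \<in> J" by auto
    have "Poly_Mapping.single m (Poly_Mapping.lookup f m) \<in> J" if "m \<in> Poly_Mapping.keys f" for m
    proof -
      from that f obtain g r where "g \<in> G" "m = g + r" by auto
      then have "Poly_Mapping.single m (Poly_Mapping.lookup f m) = Poly_Mapping.single r (Poly_Mapping.lookup f m) * Poly_Mapping.single g 1"
        by (simp add: mult_single add.commute)
      then show ?thesis using J gens[OF \<open>g \<in> G\<close>] by (simp add: is_ideal_def)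
    qed
    then have "(\<Sum>m\<in>Poly_Mapping.keys f. Poly_Mapping.single m (Poly_Mapping.lookup f m)) \<in> J"
      by (rule is_ideal_sum[OF J])
    then show "f \<in> J" using poly_mapping_sum_single[OF finite_keys order_refl, of f] by simp
  qed
qed

definition lex_gens :: "mon set" where
  "lex_gens = {mon4 2 0 0 0, mon4 1 1 0 0, mon4 1 0 1 0, mon4 1 0 0 1,
               mon4 0 2 0 0, mon4 0 1 1 0, mon4 0 1 0 2, mon4 0 0 4 0}"

definition std :: "nat \<Rightarrow> mon set" where
  "std d = (if d = 0 then {mon4 0 0 0 0}
     else if d = 1 then {mon4 1 0 0 0, mon4 0 1 0 0, mon4 0 0 1 0, mon4 0 0 0 1}
     else if d = 2 then {mon4 0 0 0 2, mon4 0 0 1 1, mon4 0 0 2 0, mon4 0 1 0 1}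
     else {mon4 0 0 0 d, mon4 0 0 1 (d - 1), mon4 0 0 2 (d - 2), mon4 0 0 3 (d - 3)})"

lemma mon4_multiple_iff:
  "(\<exists>r. mon4 a b c e = mon4 a' b' c' e' + r) \<longleftrightarrow> a' \<le> a \<and> b' \<le> b \<and> c' \<le> c \<and> e' \<le> e"
proof
  assume "\<exists>r. mon4 a b c e = mon4 a' b' c' e' + r"
  then obtain r where "mon4 a b c e = mon4 a' b' c' e' + r" by blast
  then show "a' \<le> a \<and> b' \<le> b \<and> c' \<le> c \<and> e' \<le> e"
    by (metis le_add1 lookup_add lookup_mon4)
next
  assume "a' \<le> a \<and> b' \<le> b \<and> c' \<le> c \<and> e' \<le> e"
  then have "mon4 a b c e = mon4 a' b' c' e' + mon4 (a - a') (b - b') (c - c') (e - e')"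
    by (simp add: mon4_add)
  then show "\<exists>r. mon4 a b c e = mon4 a' b' c' e' + r" ..
qed

lemma mon4_in_std_iff:
  "mon4 a b c e \<in> std (a + b + c + e) \<longleftrightarrow>
     (a = 0 \<and> b = 0 \<and> c \<le> 3) \<or> a + b + c + e = 1 \<or> (a = 0 \<and> b = 1 \<and> c = 0 \<and> e \<le> 1)"
proof -
  consider "a + b + c + e = 0" | "a + b + c + e = 1" | "a + b + c + e = 2" | "a + b + c + e \<ge> 3"
    by linarith
  then show ?thesis by cases (auto simp: std_def)
qed

lemma lex_multiple_iff_not_std: "m \<in> {g + r |g r. g \<in> lex_gens} \<longleftrightarrow> m \<notin> std (mdeg m)"
proof -
  obtain a b c e where m: "m = mon4 a b c e" by (rule mon4_cases)
  have "m \<in> {g + r |g r. g \<in> lex_gens} \<longleftrightarrow> (\<exists>g\<in>lex_gens. \<exists>r. m = g + r)" by blast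
  also have "\<dots> \<longleftrightarrow> 2 \<le> a \<or> (1 \<le> a \<and> 1 \<le> b) \<or> (1 \<le> a \<and> 1 \<le> c) \<or> (1 \<le> a \<and> 1 \<le> e)
      \<or> 2 \<le> b \<or> (1 \<le> b \<and> 1 \<le> c) \<or> (1 \<le> b \<and> 2 \<le> e) \<or> 4 \<le> c"
    unfolding m lex_gens_def by (simp add: mon4_multiple_iff)
  also have "\<dots> \<longleftrightarrow> \<not> ((a = 0 \<and> b = 0 \<and> c \<le> 3) \<or> a + b + c + e = 1 \<or> (a = 0 \<and> b = 1 \<and> c = 0 \<and> e \<le> 1))"
    by arith
  also have "\<dots> \<longleftrightarrow> m \<notin> std (mdeg m)"
    by (simp add: m mon4_in_std_iff)
  finally show ?thesis .
qed

lemma is_ideal_lexL: "is_ideal lexL"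
  unfolding lexL_def by (rule is_ideal_gen_ideal)

lemma lexL_eq: "lexL = {f :: 'k::comm_ring_1 pol. Poly_Mapping.keys f \<subseteq> {g + r |g r. g \<in> lex_gens}}"
  unfolding lexL_def xmon_eq lex_gens_def gen_ideal_monomials[symmetric] by simp

definition lex_mons :: "nat \<Rightarrow> mon set" where
  "lex_mons d = {m. mdeg m = d \<and> m \<notin> std d}"

lemma mdeg_std: "s \<in> std d \<Longrightarrow> mdeg s = d"
  by (auto simp: std_def split: if_splits)

lemma lexL_Sdeg: "lexL \<inter> Sdeg d = {f :: 'k::comm_ring_1 pol. Poly_Mapping.keys f \<subseteq> lex_mons d}"
  unfolding lexL_eq Sdeg_def lex_mons_def subset_iff lex_multiple_iff_not_std
  by (auto simp: mdeg_std)

lemma finite_std [simp]: "finite (std d)"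
  by (simp add: std_def)

lemma finite_lex_mons [simp]: "finite (lex_mons d)"
  using finite_mdeg_eq[of d] by (rule finite_subset[rotated]) (auto simp: lex_mons_def)

lemma card_std: "card (std d) = (if d = 0 then 1 else 4)"
proof -
  consider "d = 0" | "d = 1" | "d = 2" | "d \<ge> 3" by linarith
  then show ?thesis by cases (auto simp: std_def)
qed

lemma kdim_Sdeg: "kdim (Sdeg d :: 'k::field pol set) = card (lex_mons d) + card (std d)"
proof -
  have "{m. mdeg m = d} = lex_mons d \<union> std d" "lex_mons d \<inter> std d = {}"
    using mdeg_std by (auto simp: lex_mons_def)
  moreover have "Sdeg d = {f :: 'k pol. Poly_Mapping.keys f \<subseteq> {m. mdeg m = d}}"
    by (auto simp: Sdeg_def)
  ultimately show ?thesis
    using finite_mdeg_eq[of d] by (simp add: kdim_keys_subset card_Un_disjoint)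
qed

lemma kdim_lexL_Sdeg: "kdim (lexL \<inter> Sdeg d :: 'k::field pol set) = card (lex_mons d)"
  by (simp add: lexL_Sdeg kdim_keys_subset)

lemma lexL_in_Hpts: "(lexL :: 'k::field pol set) \<in> Hpts"
  unfolding Hpts_def hilb_def
proof (intro CollectI conjI allI impI)
  have "hcomp d f \<in> lexL" if "f \<in> lexL" for f :: "'k pol" and d
    using that keys_hcomp[of d f] unfolding lexL_eq by blast
  then show "homogeneous_ideal (lexL :: 'k pol set)"
    by (simp add: homogeneous_ideal_def is_ideal_lexL)
qed (simp_all add: kdim_Sdeg kdim_lexL_Sdeg card_std)

section \<open>A weighted degeneration of four points\<close>

definition base_point :: "'k::comm_ring_1 \<Rightarrow> nat \<Rightarrow> var \<Rightarrow> 'k" where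
  "base_point c k v = (case v of X \<Rightarrow> of_bool (k = 0) | Y \<Rightarrow> of_bool (k = 3) | Z \<Rightarrow> [0, 1, -1, c] ! k | W \<Rightarrow> 1)"

lemma base_point_simps [simp]:
  "base_point c k X = of_bool (k = 0)" "base_point c k Y = of_bool (k = 3)"
  "base_point c k Z = [0, 1, -1, c] ! k" "base_point c k W = 1"
  by (simp_all add: base_point_def)

lemma less_4_cases: "(k::nat) < 4 \<longleftrightarrow> k = 0 \<or> k = 1 \<or> k = 2 \<or> k = 3"
  by auto

lemma sum_std_0: "(\<Sum>s\<in>std 0. F s) = F (mon4 0 0 0 0)"
  by (simp add: std_def)

lemma sum_std_1: "(\<Sum>s\<in>std 1. F s) = F (mon4 1 0 0 0) + F (mon4 0 1 0 0) + F (mon4 0 0 1 0) + F (mon4 0 0 0 1)"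
  by (simp add: std_def add_ac)

lemma sum_std_2: "(\<Sum>s\<in>std 2. F s) = F (mon4 0 0 0 2) + F (mon4 0 0 1 1) + F (mon4 0 0 2 0) + F (mon4 0 1 0 1)"
  by (simp add: std_def add_ac)

lemma std_ge_3: "d \<ge> 3 \<Longrightarrow> std d = {mon4 0 0 0 d, mon4 0 0 1 (d - 1), mon4 0 0 2 (d - 2), mon4 0 0 3 (d - 3)}"
  by (simp add: std_def)

lemma sum_std_ge_3:
  assumes "d \<ge> 3"
  shows "(\<Sum>s\<in>std d. F s) = F (mon4 0 0 0 d) + F (mon4 0 0 1 (d - 1)) + F (mon4 0 0 2 (d - 2)) + F (mon4 0 0 3 (d - 3))"
proof -
  have "d - 1 \<noteq> d" "d - 2 \<noteq> d" "d - 3 \<noteq> d" "d - 2 \<noteq> d - 1" "d - 3 \<noteq> d - 1" "d - 3 \<noteq> d - 2"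
    using assms by auto
  then show ?thesis using assms by (simp add: std_ge_3 add_ac)
qed

locale four_points =
  fixes c :: "'k::field"
  assumes two_nonzero: "(2::'k) \<noteq> 0" and c_nonzero: "c \<noteq> 0" and c_ne_1: "c \<noteq> 1" and c_ne_minus_1: "c \<noteq> -1"
begin

lemma cube_minus_nonzero: "c ^ 3 - c \<noteq> 0"
proof
  assume "c ^ 3 - c = 0"
  then have "c * (c - 1) * (c + 1) = 0" by (simp add: algebra_simps power3_eq_cube)
  then show False using c_nonzero c_ne_1 c_ne_minus_1 by (auto simp: add_eq_0_iff2)
qed

lemma eq_0_if_sum_and_diff_eq_0:
  assumes "(x::'k) + y = 0" "x - y = 0"
  shows "x = 0 \<and> y = 0"
proof -
  have "2 * x = (x + y) + (x - y)" by (simp add: algebra_simps)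
  then have "x = 0" using assms two_nonzero by simp
  then show ?thesis using assms by simp
qed

lemma cubic_vanishing_at_nodes:
  assumes "p1 + p2 + p3 = 0" "- p1 + p2 - p3 = (0::'k)" "p1 * c + p2 * c\<^sup>2 + p3 * c ^ 3 = 0"
  shows "p1 = 0 \<and> p2 = 0 \<and> p3 = 0"
proof -
  have "p2 + (p1 + p3) = 0" "p2 - (p1 + p3) = 0" using assms(1,2) by (simp_all add: algebra_simps)
  then have p2: "p2 = 0" and "p1 + p3 = 0" using eq_0_if_sum_and_diff_eq_0 by blast+
  then have p1: "p1 = - p3" by (simp add: eq_neg_iff_add_eq_0)
  have "p3 * (c ^ 3 - c) = p1 * c + p2 * c\<^sup>2 + p3 * c ^ 3" by (simp add: p1 p2 algebra_simps)
  then have "p3 = 0" using assms(3) cube_minus_nonzero by simp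
  then show ?thesis using p1 p2 by simp
qed

lemma std_unisolvent:
  assumes vanish: "\<And>k. k < 4 \<Longrightarrow> (\<Sum>s\<in>std d. a s * mon_eval s (base_point c k)) = 0"
    and s: "s \<in> std d"
  shows "a s = 0"
proof -
  consider "d = 0" | "d = 1" | "d = 2" | "d \<ge> 3" by linarith
  then show ?thesis
  proof cases
    case 1
    then show ?thesis using s vanish[of 0] by (simp add: std_def sum_std_0 mon_eval_mon4)
  next
    case 2
    let ?x = "a (mon4 1 0 0 0)" and ?y = "a (mon4 0 1 0 0)" and ?z = "a (mon4 0 0 1 0)" and ?w = "a (mon4 0 0 0 1)"
    note sum_std = sum_std_1[unfolded One_nat_def]
    have x: "?x + ?w = 0" using vanish[of 0] by (simp add: 2 sum_std mon_eval_mon4)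
    have "?z + ?w = 0" using vanish[of 1] by (simp add: 2 sum_std mon_eval_mon4)
    moreover have "- ?z + ?w = 0" using vanish[of 2] by (simp add: 2 sum_std mon_eval_mon4)
    ultimately have "?w + ?z = 0" "?w - ?z = 0" by (simp_all add: algebra_simps)
    then have w: "?w = 0" and z: "?z = 0" using eq_0_if_sum_and_diff_eq_0 by blast+
    have "?y + ?z * c + ?w = 0" using vanish[of 3] by (simp add: 2 sum_std mon_eval_mon4)
    then show ?thesis using s x w z by (auto simp: 2 std_def)
  next
    case 3
    let ?a = "a (mon4 0 0 0 2)" and ?b = "a (mon4 0 0 1 1)" and ?c = "a (mon4 0 0 2 0)" and ?e = "a (mon4 0 1 0 1)"
    have a: "?a = 0" using vanish[of 0] by (simp add: 3 sum_std_2 mon_eval_mon4)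
    have "?a + ?b + ?c = 0" using vanish[of 1] by (simp add: 3 sum_std_2 mon_eval_mon4)
    moreover have "?a - ?b + ?c = 0" using vanish[of 2] by (simp add: 3 sum_std_2 mon_eval_mon4)
    ultimately have "?c + ?b = 0" "?c - ?b = 0" using a by simp_all
    then have c: "?c = 0" and b: "?b = 0" using eq_0_if_sum_and_diff_eq_0 by blast+
    have "?a + ?b * c + ?c * c\<^sup>2 + ?e = 0" using vanish[of 3] by (simp add: 3 sum_std_2 mon_eval_mon4)
    then show ?thesis using s a b c by (auto simp: 3 std_def)
  next
    case 4
    let ?a = "a (mon4 0 0 0 d)" and ?b = "a (mon4 0 0 1 (d - 1))"
      and ?c = "a (mon4 0 0 2 (d - 2))" and ?e = "a (mon4 0 0 3 (d - 3))"
    have a: "?a = 0" using vanish[of 0] 4 by (simp add: sum_std_ge_3 mon_eval_mon4)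
    have "?b + ?c + ?e = 0" using vanish[of 1] a 4 by (simp add: sum_std_ge_3 mon_eval_mon4)
    moreover have "- ?b + ?c - ?e = 0" using vanish[of 2] a 4 by (simp add: sum_std_ge_3 mon_eval_mon4)
    moreover have "?b * c + ?c * c\<^sup>2 + ?e * c ^ 3 = 0" using vanish[of 3] a 4 by (simp add: sum_std_ge_3 mon_eval_mon4)
    ultimately have "?b = 0" "?c = 0" "?e = 0" using cubic_vanishing_at_nodes by blast+
    then show ?thesis using s a 4 by (auto simp: std_ge_3)
  qed
qed

lemma std_interpolation:
  assumes "d \<ge> 2"
  shows "\<exists>a. \<forall>k<4. (\<Sum>s\<in>std d. a s * mon_eval s (base_point c k)) = v k"
proof -
  define A where "A = (v 1 - v 2) / 2"
  define B where "B = (v 1 + v 2) / 2 - v 0"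
  have "2 * A = v 1 - v 2" "2 * B = v 1 + v 2 - 2 * v 0"
    using two_nonzero by (simp_all add: A_def B_def right_diff_distrib)
  then have "2 * (A + B) = 2 * (v 1 - v 0)" "2 * (B - A) = 2 * (v 2 - v 0)"
    by (simp_all add: algebra_simps)
  then have AB: "A + B = v 1 - v 0" "B - A = v 2 - v 0"
    using mult_left_cancel[OF two_nonzero] by blast+
  consider "d = 2" | "d \<ge> 3" using assms by linarith
  then show ?thesis
  proof cases
    case 1
    define a where "a s = (if s = mon4 0 1 0 1 then v 3 - v 0 - A * c - B * c\<^sup>2 else [v 0, A, B] ! Poly_Mapping.lookup s Z)" for s
    have "(\<Sum>s\<in>std d. a s * mon_eval s (base_point c k)) = v k" if "k < 4" for k
      using that AB unfolding less_4_cases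
      by (auto simp: 1 sum_std_2 mon_eval_mon4 a_def algebra_simps power2_eq_square)
    then show ?thesis by blast
  next
    case 2
    define G where "G = (v 3 - v 0 - A * c - B * c\<^sup>2) / (c ^ 3 - c)"
    have G: "G * (c ^ 3 - c) = v 3 - v 0 - A * c - B * c\<^sup>2"
      using cube_minus_nonzero by (simp add: G_def)
    define a where "a s = [v 0, A - G, B, G] ! Poly_Mapping.lookup s Z" for s
    have "(\<Sum>s\<in>std d. a s * mon_eval s (base_point c k)) = v k" if "k < 4" for k
      using that AB G 2 unfolding less_4_cases
      by (auto simp: sum_std_ge_3 mon_eval_mon4 a_def algebra_simps power2_eq_square power3_eq_cube)
    then show ?thesis by blast
  qed
qed

end

definition weight :: "var \<Rightarrow> nat" where
  "weight v = (case v of X \<Rightarrow> 5 | Y \<Rightarrow> 4 | Z \<Rightarrow> 1 | W \<Rightarrow> 0)"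

definition moving_point :: "'k::comm_ring_1 \<Rightarrow> 'k \<Rightarrow> nat \<Rightarrow> var \<Rightarrow> 'k" where
  "moving_point c t k v = t ^ weight v * base_point c k v"

definition moving_ideal :: "'k::comm_ring_1 \<Rightarrow> 'k \<Rightarrow> 'k pol set" where
  "moving_ideal c t = vanishing_ideal (moving_point c t ` {..<4})"

lemma wdeg_weight_mon4 [simp]: "wdeg weight (mon4 a b c e) = 5 * a + 4 * b + c"
  by (simp add: wdeg_mon4 weight_def)

lemma mon_eval_moving_point: "mon_eval m (moving_point c t k) = t ^ wdeg weight m * mon_eval m (base_point c k)"
  using mon_eval_weighted[of m t weight "base_point c k"] by (simp add: moving_point_def[abs_def])

lemma peval_moving_point:
  assumes "finite A" "Poly_Mapping.keys g \<subseteq> A"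
  shows "peval g (moving_point c t k) = (\<Sum>m\<in>A. Poly_Mapping.lookup g m * (t ^ wdeg weight m * mon_eval m (base_point c k)))"
  using peval_superset[OF assms] by (simp add: mon_eval_moving_point)

lemma lex_mons_weight:
  assumes "m \<in> lex_mons d"
  shows "d \<ge> 2" "wdeg weight m \<ge> (if d = 2 then 5 else 4)"
proof -
  obtain a b c e where m: "m = mon4 a b c e" by (rule mon4_cases)
  have "a + b + c + e = d"
    "\<not> ((a = 0 \<and> b = 0 \<and> c \<le> 3) \<or> a + b + c + e = 1 \<or> (a = 0 \<and> b = 1 \<and> c = 0 \<and> e \<le> 1))"
    using assms mon4_in_std_iff[of a b c e] by (auto simp: m lex_mons_def)
  then show "d \<ge> 2" "wdeg weight m \<ge> (if d = 2 then 5 else 4)"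
    by (simp_all add: m) arith+
qed

lemma std_weight:
  assumes "s \<in> std d" "d \<ge> 2"
  shows "wdeg weight s \<le> (if d = 2 then 4 else 3)"
  using assms by (auto simp: std_def)

text \<open>This is what makes the deformation below polynomial in \<open>t\<close> and trivial at \<open>t = 0\<close>.\<close>

lemma weight_std_less_lex_mons:
  assumes "m \<in> lex_mons d" "s \<in> std d"
  shows "wdeg weight s < wdeg weight m"
  using lex_mons_weight[OF assms(1)] std_weight[OF assms(2)] by (auto split: if_splits)

definition std_interp :: "'k::field \<Rightarrow> nat \<Rightarrow> (nat \<Rightarrow> 'k) \<Rightarrow> mon \<Rightarrow> 'k" where
  "std_interp c d v = (SOME a. \<forall>k<4. (\<Sum>s\<in>std d. a s * mon_eval s (base_point c k)) = v k)"

lemma (in four_points) std_interp: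
  assumes "d \<ge> 2" "k < 4"
  shows "(\<Sum>s\<in>std d. std_interp c d v s * mon_eval s (base_point c k)) = v k"
  using someI_ex[OF std_interpolation[OF assms(1), of v]] assms(2) by (simp add: std_interp_def)

text \<open>Coefficient of the standard monomial \<open>s\<close> in the correction of \<open>f\<close>: the values of each monomial \<open>m\<close>
  of \<open>f\<close> at the base points are interpolated by standard monomials, and passing to the moving points
  rescales the \<open>s\<close>-coefficient by \<open>t ^ (wdeg weight m - wdeg weight s)\<close>.\<close>

definition correction_poly :: "'k::field \<Rightarrow> nat \<Rightarrow> 'k pol \<Rightarrow> mon \<Rightarrow> 'k poly" where
  "correction_poly c d f s = (\<Sum>m\<in>lex_mons d.
     monom (Poly_Mapping.lookup f m * std_interp c d (\<lambda>k. mon_eval m (base_point c k)) s) (wdeg weight m - wdeg weight s))"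

definition deform :: "'k::field \<Rightarrow> 'k \<Rightarrow> nat \<Rightarrow> 'k pol \<Rightarrow> 'k pol" where
  "deform c t d f = f - (\<Sum>s\<in>std d. Poly_Mapping.single s (poly (correction_poly c d f s) t))"

lemma lookup_deform:
  "Poly_Mapping.lookup (deform c t d f) n =
     poly ([:Poly_Mapping.lookup f n:] - (if n \<in> std d then correction_poly c d f n else 0)) t"
  by (simp add: deform_def lookup_minus lookup_sum lookup_single when_def)

lemma lookup_deform_not_std: "n \<notin> std d \<Longrightarrow> Poly_Mapping.lookup (deform c t d f) n = Poly_Mapping.lookup f n"
  by (simp add: lookup_deform)

lemma deform_at_0:
  assumes "Poly_Mapping.keys f \<subseteq> lex_mons d"
  shows "deform c 0 d f = f"
proof (rule poly_mapping_eqI)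
  fix n
  have "poly (correction_poly c d f n) 0 = 0" if "n \<in> std d"
    using weight_std_less_lex_mons[OF _ that]
    by (auto simp: correction_poly_def poly_sum poly_monom intro!: sum.neutral)
  then show "Poly_Mapping.lookup (deform c 0 d f) n = Poly_Mapping.lookup f n"
    by (simp add: lookup_deform)
qed

lemma module_hom_deform: "module_hom csmult csmult (deform c t d :: 'k::field pol \<Rightarrow> 'k pol)"
  unfolding module_hom_iff
proof (intro conjI allI vs.module_axioms)
  fix f g :: "'k pol"
  show "deform c t d (f + g) = deform c t d f + deform c t d g"
    by (rule poly_mapping_eqI)
       (simp add: lookup_deform lookup_add correction_poly_def algebra_simps sum.distrib poly_sum poly_monom)
next
  fix a :: 'k and f :: "'k pol"
  show "deform c t d (csmult a f) = csmult a (deform c t d f)"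
    by (rule poly_mapping_eqI)
       (simp add: lookup_deform correction_poly_def algebra_simps sum_distrib_left poly_sum poly_monom)
qed

lemma deform_in_Sdeg:
  assumes "Poly_Mapping.keys f \<subseteq> lex_mons d"
  shows "deform c t d f \<in> Sdeg d"
  unfolding Sdeg_def
proof (intro CollectI ballI)
  fix m assume "m \<in> Poly_Mapping.keys (deform c t d f)"
  then have "m \<in> std d \<or> m \<in> Poly_Mapping.keys f"
    by (auto simp: in_keys_iff lookup_deform_not_std)
  then show "mdeg m = d" using assms mdeg_std by (auto simp: lex_mons_def)
qed

lemma inj_on_deform: "inj_on (deform c t d) {f. Poly_Mapping.keys f \<subseteq> lex_mons d}"
proof (rule inj_onI, rule poly_mapping_eqI)
  fix f g n assume f: "f \<in> {f. Poly_Mapping.keys f \<subseteq> lex_mons d}" and g: "g \<in> {f. Poly_Mapping.keys f \<subseteq> lex_mons d}"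
    and eq: "deform c t d f = deform c t d g"
  show "Poly_Mapping.lookup f n = Poly_Mapping.lookup g n"
  proof (cases "n \<in> std d")
    case True
    then have "n \<notin> Poly_Mapping.keys f" "n \<notin> Poly_Mapping.keys g"
      using f g by (auto simp: lex_mons_def)
    then show ?thesis by (simp add: in_keys_iff)
  next
    case False
    then show ?thesis using arg_cong[OF eq, of "\<lambda>h. Poly_Mapping.lookup h n"] by (simp add: lookup_deform_not_std)
  qed
qed

lemma keys_diff_deform_restrict_keys:
  assumes "g \<in> Sdeg d"
  shows "Poly_Mapping.keys (g - deform c t d (restrict_keys (lex_mons d) g)) \<subseteq> std d"
proof
  fix n assume n: "n \<in> Poly_Mapping.keys (g - deform c t d (restrict_keys (lex_mons d) g))"
  show "n \<in> std d"
  proof (rule ccontr)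
    assume ns: "n \<notin> std d"
    have "Poly_Mapping.lookup g n = 0" if "n \<notin> lex_mons d"
      using assms that ns by (auto simp: Sdeg_def lex_mons_def in_keys_iff)
    then show False
      using n ns by (auto simp: in_keys_iff lookup_minus lookup_deform_not_std lookup_restrict_keys split: if_splits)
  qed
qed

context four_points
begin

lemma peval_deform_moving_point:
  assumes f: "Poly_Mapping.keys f \<subseteq> lex_mons d" and k: "k < 4"
  shows "peval (deform c t d f) (moving_point c t k) = 0"
proof (cases "lex_mons d = {}")
  case True
  then show ?thesis using f by (simp add: deform_def correction_poly_def)
next
  case False
  then have d: "d \<ge> 2" using lex_mons_weight(1) by blast
  let ?\<sigma> = "\<lambda>m. std_interp c d (\<lambda>k. mon_eval m (base_point c k))"
  have corr: "poly (correction_poly c d f s) t * t ^ wdeg weight s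
      = (\<Sum>m\<in>lex_mons d. Poly_Mapping.lookup f m * ?\<sigma> m s * t ^ wdeg weight m)" if "s \<in> std d" for s
  proof -
    have "t ^ (wdeg weight m - wdeg weight s) * t ^ wdeg weight s = t ^ wdeg weight m" if "m \<in> lex_mons d" for m
      using weight_std_less_lex_mons[OF that \<open>s \<in> std d\<close>] by (simp flip: power_add)
    then show ?thesis
      by (simp add: correction_poly_def poly_sum poly_monom sum_distrib_right mult.assoc)
  qed
  have "peval (\<Sum>s\<in>std d. Poly_Mapping.single s (poly (correction_poly c d f s) t)) (moving_point c t k)
      = (\<Sum>s\<in>std d. poly (correction_poly c d f s) t * t ^ wdeg weight s * mon_eval s (base_point c k))"
    by (simp add: peval_sum mon_eval_moving_point mult.assoc)
  also have "\<dots> = (\<Sum>s\<in>std d. \<Sum>m\<in>lex_mons d.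
      Poly_Mapping.lookup f m * t ^ wdeg weight m * (?\<sigma> m s * mon_eval s (base_point c k)))"
    by (intro sum.cong refl) (simp only: corr, simp add: sum_distrib_left sum_distrib_right mult_ac)
  also have "\<dots> = (\<Sum>m\<in>lex_mons d. Poly_Mapping.lookup f m * t ^ wdeg weight m *
      (\<Sum>s\<in>std d. ?\<sigma> m s * mon_eval s (base_point c k)))"
    by (simp add: sum.swap[of _ "std d"] sum_distrib_left)
  also have "\<dots> = peval f (moving_point c t k)"
    by (simp add: std_interp[OF d k] peval_moving_point[OF finite_lex_mons f] mult.assoc)
  finally show ?thesis by (simp add: deform_def peval_diff)
qed

lemma std_supported_vanishing_eq_0:
  assumes t: "t \<noteq> 0" and g: "Poly_Mapping.keys g \<subseteq> std d"
    and vanish: "\<And>k. k < 4 \<Longrightarrow> peval g (moving_point c t k) = 0"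
  shows "g = 0"
proof (rule poly_mapping_eqI)
  fix n
  have "Poly_Mapping.lookup g s * t ^ wdeg weight s = 0" if "s \<in> std d" for s
  proof (rule std_unisolvent[OF _ that])
    fix k :: nat assume "k < 4"
    then show "(\<Sum>s\<in>std d. Poly_Mapping.lookup g s * t ^ wdeg weight s * mon_eval s (base_point c k)) = 0"
      using vanish peval_moving_point[OF finite_std g] by (simp add: mult.assoc)
  qed
  then show "Poly_Mapping.lookup g n = Poly_Mapping.lookup 0 n"
    using t g by (cases "n \<in> std d") (auto simp: in_keys_iff)
qed

lemma deform_image:
  assumes t: "t \<noteq> 0"
  shows "deform c t d ` {f. Poly_Mapping.keys f \<subseteq> lex_mons d} = moving_ideal c t \<inter> Sdeg d"
  unfolding moving_ideal_def
proof
  show "deform c t d ` {f. Poly_Mapping.keys f \<subseteq> lex_mons d} \<subseteq> vanishing_ideal (moving_point c t ` {..<4}) \<inter> Sdeg d"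
  proof (intro subsetI, elim imageE)
    fix f g assume f: "f \<in> {f. Poly_Mapping.keys f \<subseteq> lex_mons d}" and g: "g = deform c t d f"
    then have "g \<in> Sdeg d" using deform_in_Sdeg by blast
    moreover have "\<forall>p\<in>moving_point c t ` {..<4}. peval g p = 0"
      using f g peval_deform_moving_point by auto
    ultimately show "g \<in> vanishing_ideal (moving_point c t ` {..<4}) \<inter> Sdeg d"
      by (simp add: homogeneous_in_vanishing_ideal_iff)
  qed
next
  show "vanishing_ideal (moving_point c t ` {..<4}) \<inter> Sdeg d \<subseteq> deform c t d ` {f. Poly_Mapping.keys f \<subseteq> lex_mons d}"
  proof
    fix g assume g: "g \<in> vanishing_ideal (moving_point c t ` {..<4}) \<inter> Sdeg d"
    define f where "f = restrict_keys (lex_mons d) g"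
    have f: "Poly_Mapping.keys f \<subseteq> lex_mons d" by (simp add: f_def keys_restrict_keys)
    have "Poly_Mapping.keys (g - deform c t d f) \<subseteq> std d"
      using g by (simp add: f_def keys_diff_deform_restrict_keys)
    moreover have "peval (g - deform c t d f) (moving_point c t k) = 0" if "k < 4" for k
      using g that peval_deform_moving_point[OF f that]
      by (auto simp: peval_diff homogeneous_in_vanishing_ideal_iff)
    ultimately have "g = deform c t d f"
      using std_supported_vanishing_eq_0[OF t] by fastforce
    then show "g \<in> deform c t d ` {f. Poly_Mapping.keys f \<subseteq> lex_mons d}" using f by blast
  qed
qed

lemma moving_ideal_in_Hpts:
  assumes "infinite (UNIV :: 'k set)" "t \<noteq> 0"
  shows "moving_ideal c t \<in> Hpts"
  unfolding moving_ideal_def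
proof (rule Hpts_if_kdim_eq[OF lexL_in_Hpts homogeneous_vanishing_ideal[OF assms(1)]])
  fix d
  have "kdim (deform c t d ` {f. Poly_Mapping.keys f \<subseteq> lex_mons d}) = kdim {f :: 'k pol. Poly_Mapping.keys f \<subseteq> lex_mons d}"
    by (rule kdim_linear_image[OF module_hom_deform subspace_keys_subset inj_on_deform])
  then show "kdim (vanishing_ideal (moving_point c t ` {..<4}) \<inter> Sdeg d) = kdim (lexL \<inter> Sdeg d :: 'k pol set)"
    by (simp add: deform_image[OF assms(2), symmetric, unfolded moving_ideal_def] lexL_Sdeg)
qed

lemma saturated_moving_ideal:
  assumes "infinite (UNIV :: 'k set)"
  shows "saturated (moving_ideal c t)"
  unfolding moving_ideal_def using assms
  by (intro saturated_vanishing_ideal) (auto simp: moving_point_def weight_def)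

lemma is_frame_moving_ideal:
  assumes "t \<noteq> 0" "is_frame lexL b"
  shows "is_frame (moving_ideal c t) (\<lambda>d i. deform c t d (b d i))"
  by (rule is_frame_linear_image[OF assms(2) is_ideal_lexL module_hom_deform])
     (simp_all add: lexL_Sdeg inj_on_deform deform_image[OF assms(1)])

lemma peval_frame_coord_lexL_eq_0:
  fixes b :: "nat \<Rightarrow> nat \<Rightarrow> 'k pol"
  assumes inf: "infinite (UNIV :: 'k set)"
    and P: "\<And>I b. I \<in> Hpts \<Longrightarrow> saturated I \<Longrightarrow> is_frame I b \<Longrightarrow> peval P (frame_coord b) = 0"
    and b: "is_frame lexL b"
  shows "peval P (frame_coord b) = 0"
proof -
  define F where "F = (\<lambda>(d, i, n). [:Poly_Mapping.lookup (b d i) n:] - (if n \<in> std d then correction_poly c d (b d i) n else 0))"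
  have coords: "frame_coord (\<lambda>d i. deform c t d (b d i)) = (\<lambda>v. poly (F v) t)" for t
    by (auto simp: frame_coord_def F_def lookup_deform)
  have "peval P (\<lambda>v. poly (F v) t) = 0" if "t \<noteq> 0" for t
    using P[OF moving_ideal_in_Hpts[OF inf that] saturated_moving_ideal[OF inf] is_frame_moving_ideal[OF that b]]
    by (simp add: coords)
  then have "peval P (\<lambda>v. poly (F v) 0) = 0"
    by (rule peval_polynomial_curve_at_0[OF inf])
  moreover have "deform c 0 d (b d i) = b d i" for d i
    using is_frame_in_graded_piece[OF is_ideal_lexL b] by (intro deform_at_0) (simp add: lexL_Sdeg)
  ultimately show ?thesis using coords[of 0] by simp
qed

end

theorem lemma4p1:
  assumes "(2::'k::alg_closed_field) \<noteq> 0"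
  shows "(lexL :: 'k pol set) \<in> Xcomp"
proof -
  have inf: "infinite (UNIV :: 'k set)" by (rule infinite_UNIV_alg_closed)
  obtain c :: 'k where "c \<notin> {0, 1, -1}"
    using ex_new_if_finite[OF inf, of "{0, 1, -1}"] by auto
  then interpret four_points c using assms by unfold_locales auto
  have "peval P (frame_coord b) = 0"
    if "\<forall>I\<in>{I \<in> Hpts. saturated I}. \<forall>b. is_frame I b \<longrightarrow> peval P (frame_coord b) = 0"
      and "is_frame lexL b" for P and b :: "nat \<Rightarrow> nat \<Rightarrow> 'k pol"
    by (rule peval_frame_coord_lexL_eq_0[OF inf _ that(2)]) (use that(1) in blast)
  then show ?thesis
    unfolding Xcomp_def zclosure_def using lexL_in_Hpts by blast
qed

end
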